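(* Let $f:[-1,1]\to[0,1]$ be non-increasing with $f(0)=\tfrac12$ and continuous at $0$, and let $\delta\in(0,\tfrac12]$. Consider the sequential design (truncated Wei's adaptive coin design) with $p_1=\tfrac12$ and, for $i\ge2$, $$p_i=\min\{\max\{f(R_{i-1}),\delta\},1-\delta\},\qquad R_{i-1}=\frac{D_{i-1}}{i-1},$$ where $D_k=m_k-n_k$, with $m_k$ and $n_k$ the numbers of units among the first $k$ assigned to treatment and control respectively, and $K_i\mid\mathcal F_{i-1}\sim\mathrm{Bernoulli}(p_i)$. Then $p_i\xrightarrow{p}\tfrac12$ as $i\to\infty$; i.e. the design is strongly stable with $p^\star=\tfrac12$.
   Context: $K_i\in\{0,1\}$ is the treatment indicator of unit $i$ and $\mathcal F_{i-1}=\sigma(K_1,\dots,K_{i-1})$ (together with the observed outcomes up to unit $i-1$). A sequential design $(p_i)$ is strongly stable if there is a non-random $p^\star\in(0,1)$ with $p_i\xrightarrow{p}p^\star$. *)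

theory Defs
  imports "HOL-Probability.Probability"
begin

text \<open>Units are indexed by i = 1, 2, ...; K i w is True iff unit i is assigned to treatment.
  D k = m_k - n_k (treated minus control among the first k units).\<close>

definition imbalance :: "(nat \<Rightarrow> 'a \<Rightarrow> bool) \<Rightarrow> nat \<Rightarrow> 'a \<Rightarrow> real" where
  "imbalance K k w = (\<Sum>j\<in>{1..k}. if K j w then 1 else -1)"

definition wei_p :: "(real \<Rightarrow> real) \<Rightarrow> real \<Rightarrow> (nat \<Rightarrow> 'a \<Rightarrow> bool) \<Rightarrow> nat \<Rightarrow> 'a \<Rightarrow> real" where
  "wei_p f \<delta> K i w =
     (if i \<le> 1 then 1/2
      else min (max (f (imbalance K (i - 1) w / real (i - 1))) \<delta>) (1 - \<delta>))"

end

theory Submission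
  imports Defs
begin

text \<open>Since f is non-increasing with f 0 = 1/2, the coin is biased against the current imbalance:
  D_m and 2 p_{m+1} - 1 never have the same sign. Hence E[D_m (2 K_{m+1} - 1)] =
  E[D_m (2 p_{m+1} - 1)] \<le> 0, so E[D_{m+1}^2] \<le> E[D_m^2] + 1 and E[D_m^2] \<le> m. By Chebyshev,
  D_m / m \<rightarrow> 0 in probability, and continuity of f at 0 transfers this to p_{m+1} \<rightarrow> 1/2.\<close>

lemma imbalance_0 [simp]: "imbalance K 0 w = 0"
  unfolding imbalance_def by simp

lemma imbalance_Suc:
  "imbalance K (Suc m) w = imbalance K m w + (if K (Suc m) w then 1 else -1)"
  unfolding imbalance_def by simp

lemma imbalance_eq_card: "imbalance K m w = 2 * real (card {j\<in>{1..m}. K j w}) - real m"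
proof -
  let ?T = "{j\<in>{1..m}. K j w}"
  have "card ?T \<le> card {1..m}" by (rule card_mono) auto
  moreover have "card ({1..m} - ?T) = m - card ?T"
    by (subst card_Diff_subset) auto
  moreover have "{1..m} \<inter> {j. K j w} = ?T" "{1..m} \<inter> - {j. K j w} = {1..m} - ?T" by auto
  then have "imbalance K m w = real (card ?T) - real (card ({1..m} - ?T))"
    unfolding imbalance_def sum.If_cases[OF finite_atLeastAtMost] by simp
  ultimately show ?thesis by simp
qed

lemma abs_imbalance_le: "\<bar>imbalance K m w\<bar> \<le> real m"
proof -
  have "card {j\<in>{1..m}. K j w} \<le> card {1..m}" by (rule card_mono) auto
  then show ?thesis by (simp add: imbalance_eq_card)
qed

lemma finite_imbalance_image: "finite (imbalance K m ` S)"
proof (rule finite_subset)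
  show "imbalance K m ` S \<subseteq> (\<lambda>k. 2 * real k - real m) ` {..m}"
  proof
    fix x assume "x \<in> imbalance K m ` S"
    then obtain w where x: "x = imbalance K m w" by auto
    have "card {j\<in>{1..m}. K j w} \<le> card {1..m}" by (rule card_mono) auto
    then show "x \<in> (\<lambda>k. 2 * real k - real m) ` {..m}"
      unfolding x imbalance_eq_card by auto
  qed
qed simp

lemma abs_imbalance_div_le_1: "\<bar>imbalance K m w / real m\<bar> \<le> 1"
  using abs_imbalance_le[of K m w] by (cases "m = 0") (auto simp: divide_le_eq)

lemma measurable_imbalance:
  assumes "\<And>j. j \<in> {1..m} \<Longrightarrow> K j \<in> measurable N (count_space UNIV)"
  shows "imbalance K m \<in> borel_measurable N"
proof -
  have "(\<lambda>w. (\<lambda>b. if b then 1 else -1 :: real) (K j w)) \<in> borel_measurable N"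
    if "j \<in> {1..m}" for j
    by (rule measurable_compose[OF assms[OF that] borel_measurable_count_space])
  then show ?thesis
    unfolding imbalance_def by (intro borel_measurable_sum) auto
qed

lemma simple_function_imbalance:
  assumes "\<And>j. j \<in> {1..m} \<Longrightarrow> K j \<in> measurable N (count_space UNIV)"
  shows "simple_function N (imbalance K m)"
  using assms by (intro simple_function_borel_measurable measurable_imbalance finite_imbalance_image)

lemma (in finite_measure) integral_simple_mult_indicator_eq:
  fixes g p :: "'a \<Rightarrow> real"
  assumes space_N: "space N = space M" and sets_N: "sets N \<subseteq> sets M"
    and g: "simple_function N g" and S: "S \<in> sets M" and p: "integrable M p"
    and cond_prob: "\<And>A. A \<in> sets N \<Longrightarrow> measure M (A \<inter> S) = (\<integral>w\<in>A. p w \<partial>M)"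
  shows "(\<integral>w. g w * indicator S w \<partial>M) = (\<integral>w. g w * p w \<partial>M)"
proof -
  define V where "V = g ` space M"
  define A where "A y = g -` {y} \<inter> space M" for y
  have V: "finite V"
    using simple_functionD(1)[OF g] by (simp add: V_def space_N)
  have A_N: "A y \<in> sets N" for y
    using simple_functionD(2)[OF g, of "{y}"] by (simp add: A_def space_N)
  then have A_M: "A y \<in> sets M" for y
    using sets_N by auto
  have g_repr: "g w = (\<Sum>y\<in>V. indicator (A y) w * y)" if "w \<in> space M" for w
    using simple_function_indicator_representation_banach[OF g, of w] that
    by (simp only: V_def A_def space_N real_scaleR_def)
  have "(\<integral>w. g w * indicator S w \<partial>M) = (\<integral>w. (\<Sum>y\<in>V. y * indicator (A y \<inter> S) w) \<partial>M)"
    by (intro Bochner_Integration.integral_cong[OF refl])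
       (simp_all add: g_repr sum_distrib_left sum_distrib_right indicator_inter_arith mult_ac)
  also have "\<dots> = (\<Sum>y\<in>V. y * measure M (A y \<inter> S))"
    using A_M S by (subst Bochner_Integration.integral_sum)
       (auto simp: sets.Int less_top[symmetric])
  also have "\<dots> = (\<Sum>y\<in>V. y * (\<integral>w. indicator (A y) w * p w \<partial>M))"
    by (simp add: cond_prob A_N set_lebesgue_integral_def)
  also have "\<dots> = (\<integral>w. (\<Sum>y\<in>V. y * (indicator (A y) w * p w)) \<partial>M)"
    using integrable_real_mult_indicator[OF A_M p]
    by (subst Bochner_Integration.integral_sum) (auto simp: mult_ac)
  also have "\<dots> = (\<integral>w. g w * p w \<partial>M)"
    by (intro Bochner_Integration.integral_cong[OF refl])
       (simp_all add: g_repr sum_distrib_left sum_distrib_right mult_ac)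
  finally show ?thesis .
qed

locale adapted_assignment = prob_space M for M :: "'a measure" +
  fixes F :: "nat \<Rightarrow> 'a measure" and K :: "nat \<Rightarrow> 'a \<Rightarrow> bool"
  assumes space_F: "\<And>n. space (F n) = space M"
    and sets_F_subset: "\<And>n. sets (F n) \<subseteq> sets M"
    and sets_F_mono: "\<And>m n. m \<le> n \<Longrightarrow> sets (F m) \<subseteq> sets (F n)"
    and K_measurable: "\<And>n. K n \<in> measurable (F n) (count_space UNIV)"
begin

lemma measurable_F_imp_M: "g \<in> measurable (F n) N \<Longrightarrow> g \<in> measurable M N"
  using measurable_mono[of N N "F n" M] sets_F_subset space_F by auto

lemma K_measurable_F: "j \<le> n \<Longrightarrow> K j \<in> measurable (F n) (count_space UNIV)"
  using measurable_mono[of "count_space UNIV" "count_space UNIV" "F j" "F n"]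
    K_measurable sets_F_mono space_F by auto

lemma K_measurable_M: "K n \<in> measurable M (count_space UNIV)"
  by (rule measurable_F_imp_M[OF K_measurable])

lemma simple_function_imbalance_F: "simple_function (F m) (imbalance K m)"
  by (rule simple_function_imbalance) (auto intro: K_measurable_F)

lemma imbalance_measurable_M: "imbalance K m \<in> borel_measurable M"
  by (rule measurable_F_imp_M[OF borel_measurable_simple_function[OF simple_function_imbalance_F]])

lemma integrable_imbalance_mult:
  assumes "g \<in> borel_measurable M" and "\<And>w. w \<in> space M \<Longrightarrow> \<bar>g w\<bar> \<le> 1"
  shows "integrable M (\<lambda>w. imbalance K m w * g w)"
proof (rule integrable_const_bound[where B = "real m"])
  show "AE w in M. norm (imbalance K m w * g w) \<le> real m"
  proof (rule AE_I2)
    fix w assume "w \<in> space M"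
    then have "\<bar>imbalance K m w\<bar> * \<bar>g w\<bar> \<le> real m * 1"
      by (intro mult_mono abs_imbalance_le assms(2)) auto
    then show "norm (imbalance K m w * g w) \<le> real m" by (simp add: abs_mult)
  qed
qed (use assms imbalance_measurable_M in auto)

lemma integrable_imbalance_sq: "integrable M (\<lambda>w. (imbalance K m w)\<^sup>2)"
proof (rule integrable_const_bound[where B = "(real m)\<^sup>2"])
  show "AE w in M. norm ((imbalance K m w)\<^sup>2) \<le> (real m)\<^sup>2"
    using power_mono[OF abs_imbalance_le abs_ge_zero, of K m _ 2] by (simp add: power_abs)
qed (use imbalance_measurable_M in auto)

end

locale sequential_design = adapted_assignment +
  fixes p :: "nat \<Rightarrow> 'a \<Rightarrow> real"
  assumes p_predictable: "\<And>m. p (Suc m) \<in> borel_measurable (F m)"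
    and p_bounds: "\<And>m w. w \<in> space M \<Longrightarrow> 0 \<le> p m w \<and> p m w \<le> 1"
    and assignment_prob: "\<And>m A. A \<in> sets (F m) \<Longrightarrow>
      measure M (A \<inter> {w \<in> space M. K (Suc m) w}) = (\<integral>w\<in>A. p (Suc m) w \<partial>M)"
begin

lemma integral_imbalance_mult_increment:
  "(\<integral>w. imbalance K m w * (if K (Suc m) w then 1 else -1) \<partial>M)
    = (\<integral>w. imbalance K m w * (2 * p (Suc m) w - 1) \<partial>M)"
proof -
  let ?D = "imbalance K m" and ?S = "{w \<in> space M. K (Suc m) w}"
  have S: "?S \<in> sets M"
    using K_measurable_M by measurable
  have p: "p (Suc m) \<in> borel_measurable M"
    by (rule measurable_F_imp_M[OF p_predictable])
  have int_p: "integrable M (p (Suc m))"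
    using p p_bounds by (intro integrable_const_bound[where B = 1]) auto
  have int_D: "integrable M ?D"
    using integrable_imbalance_mult[of "\<lambda>_. 1"] by simp
  have int_DS: "integrable M (\<lambda>w. ?D w * indicator ?S w)"
    using S by (intro integrable_imbalance_mult) auto
  have int_Dp: "integrable M (\<lambda>w. ?D w * p (Suc m) w)"
    using p p_bounds by (intro integrable_imbalance_mult) (auto simp: abs_le_iff)
  have "(\<integral>w. ?D w * (if K (Suc m) w then 1 else -1) \<partial>M)
      = (\<integral>w. 2 * (?D w * indicator ?S w) - ?D w \<partial>M)"
    by (intro Bochner_Integration.integral_cong[OF refl]) (auto simp: indicator_def)
  also have "\<dots> = 2 * (\<integral>w. ?D w * indicator ?S w \<partial>M) - (\<integral>w. ?D w \<partial>M)"
    using int_DS int_D by simp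
  also have "\<dots> = 2 * (\<integral>w. ?D w * p (Suc m) w \<partial>M) - (\<integral>w. ?D w \<partial>M)"
    using integral_simple_mult_indicator_eq[OF space_F sets_F_subset simple_function_imbalance_F
        S int_p assignment_prob]
    by simp
  also have "\<dots> = (\<integral>w. 2 * (?D w * p (Suc m) w) - ?D w \<partial>M)"
    using int_Dp int_D by simp
  also have "\<dots> = (\<integral>w. ?D w * (2 * p (Suc m) w - 1) \<partial>M)"
    by (intro Bochner_Integration.integral_cong[OF refl]) (simp add: algebra_simps)
  finally show ?thesis .
qed

end

locale balancing_design = sequential_design +
  assumes balancing: "\<And>m w. w \<in> space M \<Longrightarrow> imbalance K m w * (2 * p (Suc m) w - 1) \<le> 0"
begin

lemma integral_imbalance_sq_le: "(\<integral>w. (imbalance K m w)\<^sup>2 \<partial>M) \<le> real m"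
proof (induction m)
  case (Suc m)
  let ?D = "imbalance K m" and ?X = "\<lambda>w. if K (Suc m) w then 1 else -1 :: real"
  have X: "?X \<in> borel_measurable M"
    by (rule measurable_compose[OF K_measurable_M borel_measurable_count_space])
  have int_DX: "integrable M (\<lambda>w. ?D w * ?X w)"
    using X by (intro integrable_imbalance_mult) auto
  have "0 \<le> (\<integral>w. - (?D w * (2 * p (Suc m) w - 1)) \<partial>M)"
    using balancing by (intro integral_nonneg_AE AE_I2) auto
  then have cross: "(\<integral>w. ?D w * ?X w \<partial>M) \<le> 0"
    by (simp add: integral_imbalance_mult_increment)
  have "(\<integral>w. (imbalance K (Suc m) w)\<^sup>2 \<partial>M) = (\<integral>w. (?D w)\<^sup>2 + 2 * (?D w * ?X w) + 1 \<partial>M)"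
    by (intro Bochner_Integration.integral_cong[OF refl])
       (simp add: imbalance_Suc power2_eq_square algebra_simps)
  also have "\<dots> = (\<integral>w. (?D w)\<^sup>2 \<partial>M) + 2 * (\<integral>w. ?D w * ?X w \<partial>M) + 1"
    using integrable_imbalance_sq int_DX by (simp add: prob_space)
  also have "\<dots> \<le> real (Suc m)"
    using Suc.IH cross by simp
  finally show ?case .
qed simp

lemma prob_abs_imbalance_ratio_ge_le:
  assumes "0 < \<eta>" "0 < m"
  shows "measure M {w \<in> space M. \<eta> \<le> \<bar>imbalance K m w / real m\<bar>} \<le> 1 / (\<eta>\<^sup>2 * real m)"
proof -
  have "measure M {w \<in> space M. \<eta> \<le> \<bar>imbalance K m w / real m\<bar>}
      = measure M {w \<in> space M. \<eta> * real m \<le> \<bar>imbalance K m w\<bar>}"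
    using \<open>0 < m\<close> by (intro arg_cong[where f = "measure M"]) (auto simp: le_divide_eq)
  also have "\<dots> \<le> (\<integral>w. (imbalance K m w)\<^sup>2 \<partial>M) / (\<eta> * real m)\<^sup>2"
    using assms imbalance_measurable_M integrable_imbalance_sq
    by (intro second_moment_method) auto
  also have "\<dots> \<le> real m / (\<eta> * real m)\<^sup>2"
    using integral_imbalance_sq_le by (intro divide_right_mono) auto
  also have "\<dots> = 1 / (\<eta>\<^sup>2 * real m)"
    using \<open>0 < m\<close> by (simp add: power2_eq_square)
  finally show ?thesis .
qed

theorem tendsto_prob_far_from_half:
  assumes near_half: "\<exists>\<eta>>0. \<forall>m>0. \<forall>w\<in>space M.
      \<bar>imbalance K m w / real m\<bar> < \<eta> \<longrightarrow> \<bar>p (Suc m) w - 1/2\<bar> \<le> \<epsilon>"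
  shows "(\<lambda>i. measure M {w \<in> space M. \<bar>p i w - 1/2\<bar> > \<epsilon>}) \<longlonglongrightarrow> 0"
proof -
  obtain \<eta> where "0 < \<eta>" and \<eta>: "\<And>m w. 0 < m \<Longrightarrow> w \<in> space M \<Longrightarrow>
      \<bar>imbalance K m w / real m\<bar> < \<eta> \<Longrightarrow> \<bar>p (Suc m) w - 1/2\<bar> \<le> \<epsilon>"
    using near_half by blast
  have bound: "measure M {w \<in> space M. \<bar>p (Suc m) w - 1/2\<bar> > \<epsilon>} \<le> 1 / (\<eta>\<^sup>2 * real m)"
    if "0 < m" for m
  proof -
    have "{w \<in> space M. \<bar>p (Suc m) w - 1/2\<bar> > \<epsilon>}
        \<subseteq> {w \<in> space M. \<eta> \<le> \<bar>imbalance K m w / real m\<bar>}"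
      using \<eta>[OF that] by force
    moreover have "{w \<in> space M. \<eta> \<le> \<bar>imbalance K m w / real m\<bar>} \<in> sets M"
      using imbalance_measurable_M by measurable
    ultimately have "measure M {w \<in> space M. \<bar>p (Suc m) w - 1/2\<bar> > \<epsilon>}
        \<le> measure M {w \<in> space M. \<eta> \<le> \<bar>imbalance K m w / real m\<bar>}"
      by (rule finite_measure_mono)
    also have "\<dots> \<le> 1 / (\<eta>\<^sup>2 * real m)"
      by (rule prob_abs_imbalance_ratio_ge_le[OF \<open>0 < \<eta>\<close> that])
    finally show ?thesis .
  qed
  have "(\<lambda>m. (1 / \<eta>\<^sup>2) / real m) \<longlonglongrightarrow> 0"
    by (rule lim_const_over_n)
  then have "(\<lambda>m. 1 / (\<eta>\<^sup>2 * real m)) \<longlonglongrightarrow> 0"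
    by simp
  then have "(\<lambda>m. measure M {w \<in> space M. \<bar>p (Suc m) w - 1/2\<bar> > \<epsilon>}) \<longlonglongrightarrow> 0"
    by (rule tendsto_sandwich[rotated 2, OF tendsto_const])
       (auto intro!: eventually_sequentiallyI[of 1] bound)
  then show ?thesis
    by (rule LIMSEQ_imp_Suc)
qed

end

lemma wei_p_Suc:
  "wei_p f \<delta> K (Suc m) w =
    (if m = 0 then 1/2 else min (max (f (imbalance K m w / real m)) \<delta>) (1 - \<delta>))"
  unfolding wei_p_def by simp

lemma wei_p_bounds: "0 \<le> \<delta> \<Longrightarrow> \<delta> \<le> 1/2 \<Longrightarrow> 0 \<le> wei_p f \<delta> K i w \<and> wei_p f \<delta> K i w \<le> 1"
  unfolding wei_p_def by (auto simp: min_def max_def)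

lemma simple_function_wei_p:
  assumes "\<And>j. j \<in> {1..m} \<Longrightarrow> K j \<in> measurable N (count_space UNIV)"
  shows "simple_function N (wei_p f \<delta> K (Suc m))"
proof -
  have "wei_p f \<delta> K (Suc m) =
      (\<lambda>x. if m = 0 then 1/2 else min (max (f (x / real m)) \<delta>) (1 - \<delta>)) \<circ> imbalance K m"
    by (simp add: fun_eq_iff wei_p_Suc)
  then show ?thesis
    using simple_function_compose[OF simple_function_imbalance[OF assms]] by simp
qed

lemma mult_clamp_bias_nonpos:
  fixes f :: "real \<Rightarrow> real"
  assumes f_noninc: "\<forall>x y. -1 \<le> x \<and> x \<le> y \<and> y \<le> 1 \<longrightarrow> f y \<le> f x"
    and f0: "f 0 = 1/2" and "\<delta> \<le> 1/2" and "-1 \<le> x" "x \<le> 1"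
  shows "x * (2 * min (max (f x) \<delta>) (1 - \<delta>) - 1) \<le> 0"
proof (cases "0 \<le> x")
  case True
  then have "f x \<le> 1/2"
    using f_noninc[rule_format, of 0 x] assms by simp
  then have "2 * min (max (f x) \<delta>) (1 - \<delta>) - 1 \<le> 0"
    using \<open>\<delta> \<le> 1/2\<close> by (simp add: min_def max_def)
  with True show ?thesis by (rule mult_nonneg_nonpos)
next
  case False
  then have "1/2 \<le> f x"
    using f_noninc[rule_format, of x 0] assms by simp
  then have "0 \<le> 2 * min (max (f x) \<delta>) (1 - \<delta>) - 1"
    using \<open>\<delta> \<le> 1/2\<close> by (simp add: min_def max_def)
  with False show ?thesis by (intro mult_nonpos_nonneg) auto
qed

lemma imbalance_mult_wei_bias_nonpos:
  assumes "\<forall>x y. -1 \<le> x \<and> x \<le> y \<and> y \<le> 1 \<longrightarrow> f y \<le> f x" and "f 0 = 1/2" and "\<delta> \<le> 1/2"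
  shows "imbalance K m w * (2 * wei_p f \<delta> K (Suc m) w - 1) \<le> 0"
proof (cases "m = 0")
  case False
  let ?x = "imbalance K m w / real m"
  have x_bounds: "-1 \<le> ?x" "?x \<le> 1"
    using abs_imbalance_div_le_1[of K m w] by linarith+
  have "wei_p f \<delta> K (Suc m) w = min (max (f ?x) \<delta>) (1 - \<delta>)"
    using False by (simp add: wei_p_Suc)
  then have "?x * (2 * wei_p f \<delta> K (Suc m) w - 1) \<le> 0"
    using mult_clamp_bias_nonpos[OF assms x_bounds] by simp
  moreover have "imbalance K m w = real m * ?x"
    using False by simp
  ultimately show ?thesis
    by (metis mult.assoc mult_nonneg_nonpos of_nat_0_le_iff)
qed simp

lemma abs_clamp_sub_half_le:
  fixes a \<delta> :: real
  assumes "\<delta> \<le> 1/2"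
  shows "\<bar>min (max a \<delta>) (1 - \<delta>) - 1/2\<bar> \<le> \<bar>a - 1/2\<bar>"
  using assms by (simp add: min_def max_def abs_if)

lemma abs_wei_p_sub_half_le:
  assumes "\<delta> \<le> 1/2" and "0 < m"
  shows "\<bar>wei_p f \<delta> K (Suc m) w - 1/2\<bar> \<le> \<bar>f (imbalance K m w / real m) - 1/2\<bar>"
  using abs_clamp_sub_half_le[OF assms(1)] assms(2) by (simp add: wei_p_Suc)

lemma sequential_design_wei_p:
  assumes "adapted_assignment M F K" and "0 \<le> \<delta>" "\<delta> \<le> 1/2"
    and design: "\<And>i A. i \<ge> 1 \<Longrightarrow> A \<in> sets (F (i - 1)) \<Longrightarrow>
        measure M (A \<inter> {w \<in> space M. K i w}) = (\<integral>w\<in>A. wei_p f \<delta> K i w \<partial>M)"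
  shows "sequential_design M F K (wei_p f \<delta> K)"
proof (intro sequential_design.intro sequential_design_axioms.intro)
  show "adapted_assignment M F K" by fact
  show "wei_p f \<delta> K (Suc m) \<in> borel_measurable (F m)" for m
    by (intro borel_measurable_simple_function simple_function_wei_p
        adapted_assignment.K_measurable_F[OF assms(1)]) auto
  show "0 \<le> wei_p f \<delta> K m w \<and> wei_p f \<delta> K m w \<le> 1" for m w
    using assms(2,3) by (rule wei_p_bounds)
  show "measure M (A \<inter> {w \<in> space M. K (Suc m) w}) = (\<integral>w\<in>A. wei_p f \<delta> K (Suc m) w \<partial>M)"
    if "A \<in> sets (F m)" for m A
    using design[of "Suc m" A] that by simp
qed

lemma balancing_design_wei_p:
  assumes "adapted_assignment M F K"
    and f_noninc: "\<forall>x y. -1 \<le> x \<and> x \<le> y \<and> y \<le> 1 \<longrightarrow> f y \<le> f x" and f0: "f 0 = 1/2"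
    and "0 \<le> \<delta>" "\<delta> \<le> 1/2"
    and design: "\<And>i A. i \<ge> 1 \<Longrightarrow> A \<in> sets (F (i - 1)) \<Longrightarrow>
        measure M (A \<inter> {w \<in> space M. K i w}) = (\<integral>w\<in>A. wei_p f \<delta> K i w \<partial>M)"
  shows "balancing_design M F K (wei_p f \<delta> K)"
proof (intro balancing_design.intro balancing_design_axioms.intro)
  show "sequential_design M F K (wei_p f \<delta> K)"
    using assms(1,4,5) design by (rule sequential_design_wei_p)
  show "imbalance K m w * (2 * wei_p f \<delta> K (Suc m) w - 1) \<le> 0" for m w
    using f_noninc f0 \<open>\<delta> \<le> 1/2\<close> by (rule imbalance_mult_wei_bias_nonpos)
qed

lemma wei_p_near_half:
  assumes f0: "f 0 = 1/2" and f_cont: "continuous (at 0 within {-1..1}) f"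
    and "\<delta> \<le> 1/2" and "0 < \<epsilon>"
  shows "\<exists>\<eta>>0. \<forall>m>0. \<forall>w.
    \<bar>imbalance K m w / real m\<bar> < \<eta> \<longrightarrow> \<bar>wei_p f \<delta> K (Suc m) w - 1/2\<bar> \<le> \<epsilon>"
proof -
  obtain \<eta> where "0 < \<eta>" and \<eta>: "\<And>x. x \<in> {-1..1} \<Longrightarrow> dist x 0 < \<eta> \<Longrightarrow> dist (f x) (f 0) < \<epsilon>"
    using f_cont \<open>0 < \<epsilon>\<close> unfolding continuous_within_eps_delta by metis
  have "\<bar>wei_p f \<delta> K (Suc m) w - 1/2\<bar> \<le> \<epsilon>"
    if "0 < m" and small: "\<bar>imbalance K m w / real m\<bar> < \<eta>" for m w
  proof -
    have "imbalance K m w / real m \<in> {-1..1}"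
      using abs_imbalance_div_le_1[of K m w] unfolding atLeastAtMost_iff abs_le_iff by linarith
    then have "\<bar>f (imbalance K m w / real m) - 1/2\<bar> < \<epsilon>"
      using \<eta> small by (simp add: dist_real_def f0)
    then show ?thesis
      using abs_wei_p_sub_half_le[OF \<open>\<delta> \<le> 1/2\<close> that(1), of f K w] by linarith
  qed
  with \<open>0 < \<eta>\<close> show ?thesis by blast
qed

theorem lemma1:
  fixes M :: "'a measure" and F :: "nat \<Rightarrow> 'a measure"
    and K :: "nat \<Rightarrow> 'a \<Rightarrow> bool" and f :: "real \<Rightarrow> real" and \<delta> :: real
  assumes "prob_space M"
    and f_range: "\<forall>x\<in>{-1..1}. 0 \<le> f x \<and> f x \<le> 1"
    and f_noninc: "\<forall>x y. -1 \<le> x \<and> x \<le> y \<and> y \<le> 1 \<longrightarrow> f y \<le> f x"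
    and f0: "f 0 = 1/2"
    and f_cont: "continuous (at 0 within {-1..1}) f"
    and \<delta>: "0 < \<delta>" "\<delta> \<le> 1/2"
    and filt_space: "\<And>n. space (F n) = space M"
    and filt_sub: "\<And>n. sets (F n) \<subseteq> sets M"
    and filt_mono: "\<And>m n. m \<le> n \<Longrightarrow> sets (F m) \<subseteq> sets (F n)"
    and adapted: "\<And>n. K n \<in> measurable (F n) (count_space UNIV)"
    and design: "\<And>i A. i \<ge> 1 \<Longrightarrow> A \<in> sets (F (i - 1)) \<Longrightarrow>
        measure M (A \<inter> {w \<in> space M. K i w}) = (\<integral>w\<in>A. wei_p f \<delta> K i w \<partial>M)"
  shows "\<forall>\<epsilon>>0. ((\<lambda>i. measure M {w \<in> space M. \<bar>wei_p f \<delta> K i w - 1/2\<bar> > \<epsilon>})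
            \<longlongrightarrow> 0) sequentially"
proof (intro allI impI)
  fix \<epsilon> :: real assume "0 < \<epsilon>"
  have "adapted_assignment M F K"
    using \<open>prob_space M\<close> filt_space filt_sub filt_mono adapted
    by (intro adapted_assignment.intro adapted_assignment_axioms.intro)
  then have "balancing_design M F K (wei_p f \<delta> K)"
    using \<delta> by (intro balancing_design_wei_p[OF _ f_noninc f0 _ _ design]) auto
  moreover have "\<exists>\<eta>>0. \<forall>m>0. \<forall>w\<in>space M.
      \<bar>imbalance K m w / real m\<bar> < \<eta> \<longrightarrow> \<bar>wei_p f \<delta> K (Suc m) w - 1/2\<bar> \<le> \<epsilon>"
    using wei_p_near_half[OF f0 f_cont \<delta>(2) \<open>0 < \<epsilon>\<close>, of K] by blast
  ultimately show "(\<lambda>i. measure M {w \<in> space M. \<bar>wei_p f \<delta> K i w - 1/2\<bar> > \<epsilon>}) \<longlonglongrightarrow> 0"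
    by (rule balancing_design.tendsto_prob_far_from_half)
qed

end
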